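(* Let $\psi\colon\mathbb R^2\to\mathbb R$ be smooth and $p_\ast\in\mathbb R^2$ be such that conditions 1–7 below hold with $N=2$. Let $\mathsf X:=\mathbb R^2\times\mathbb S^1$ and for $\varepsilon>0$ define $V_\varepsilon\colon\mathsf X\to\mathbb R$ by $V_\varepsilon([p,o]):=y_\ast-\psi(p)+\varepsilon\langle\nabla\psi(p),o-o_\perp\rangle^2$. Let $z_\ast:=y_\ast-\underline y\in(0,\infty]$. Then there exists $\varepsilon_1>0$ such that for every $\varepsilon\in(0,\varepsilon_1)$: (i) $0<V_\varepsilon(x)<z_\ast$ for every $x=[p,o]\in\mathsf X$ with $p\ne p_\ast$; (ii) the sublevel set $\{x\in\mathsf X: V_\varepsilon(x)\le z\}$ is compact for every $z\in(0,z_\ast)$.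
   Context: $\mathbb S^1$ is the unit circle in $\mathbb R^2$; for $o\in\mathbb S^1$, $o_\perp\in\mathbb S^1$ is the unique element such that $(o,o_\perp)$ is a positively oriented orthonormal basis of $\mathbb R^2$. Notation: $y_\ast:=\psi(p_\ast)$, $\underline y:=\inf_{p}\psi(p)\in\mathbb R\cup\{-\infty\}$, $|\nabla^2\psi(p)|$ the operator norm of the Hessian, $\psi^{-1}(\ge y):=\{p:\psi(p)\ge y\}$. Conditions: (1) $\psi(p)<y_\ast$ for all $p\ne p_\ast$; (2) $\nabla^2\psi(p_\ast)$ negative definite; (3) there is $r_1>0$ with $\psi(p_\ast+v)=\psi(p_\ast-v)$ for $|v|\le r_1$; (4) there is $c_1>0$ with $|\nabla^2\psi(p)|\le c_1$ for all $p$; (5) $\nabla\psi(p)\ne0$ for $p\ne p_\ast$; (6) for every $y\in(\underline y,y_\ast)$, $\psi^{-1}(\ge y)$ is compact; (7) there are $c_2,r_2,r_3>0$ with $|\nabla^2\psi(p+v)|\le c_2|\nabla\psi(p)|$ for all $|p-p_\ast|\ge r_2$, $|v|\le r_3$. *)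

theory Defs
  imports "HOL-Analysis.Analysis"
begin

fun Ck :: "nat \<Rightarrow> ('a::euclidean_space \<Rightarrow> real) \<Rightarrow> bool" where
  "Ck 0 f = continuous_on UNIV f"
| "Ck (Suc k) f = ((\<forall>x. f differentiable (at x)) \<and>
      (\<forall>i\<in>Basis. Ck k (\<lambda>x. frechet_derivative f (at x) i)))"

definition smooth :: "('a::euclidean_space \<Rightarrow> real) \<Rightarrow> bool" where
  "smooth f \<longleftrightarrow> (\<forall>k. Ck k f)"

definition grad :: "(real^2 \<Rightarrow> real) \<Rightarrow> real^2 \<Rightarrow> real^2" where
  "grad f p = (\<chi> i. frechet_derivative f (at p) (axis i 1))"

definition hess :: "(real^2 \<Rightarrow> real) \<Rightarrow> real^2 \<Rightarrow> real^2^2" where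
  "hess f p = (\<chi> i j. frechet_derivative (\<lambda>q. grad f q $ j) (at p) (axis i 1))"

definition mnorm :: "real^2^2 \<Rightarrow> real" where
  "mnorm A = onorm (\<lambda>v. A *v v)"

definition neg_definite :: "real^2^2 \<Rightarrow> bool" where
  "neg_definite A \<longleftrightarrow> (\<forall>v. v \<noteq> 0 \<longrightarrow> v \<bullet> (A *v v) < 0)"

text \<open>o_perp: (o, o_perp) positively oriented orthonormal basis, i.e. rotation by +90 degrees.\<close>
definition perp :: "real^2 \<Rightarrow> real^2" where
  "perp u = vector [- (u $ 2), u $ 1]"

definition Veps :: "(real^2 \<Rightarrow> real) \<Rightarrow> real^2 \<Rightarrow> real \<Rightarrow> real^2 \<Rightarrow> real^2 \<Rightarrow> real" where
  "Veps \<psi> pstar \<epsilon> p u = \<psi> pstar - \<psi> p + \<epsilon> * (grad \<psi> p \<bullet> (u - perp u))\<^sup>2"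

end

theory Submission
  imports Defs
begin

text \<open>
  Write g = grad psi p and let c bound the Hessian (condition 4). Two mean value steps give
  psi (p + v) <= psi p + g . v + c |v|^2, so the gradient step v = -g/(2c) shows
  inf psi <= psi p - |g|^2/(4c). Since |o - o_perp|^2 = 2, the correction term of V_eps is at
  most 2 eps |g|^2, which is strictly below |g|^2/(4c) when eps < 1/(8c) and g \<noteq> 0
  (condition 5); hence V_eps < y_* - inf psi. Positivity is condition 1. As V_eps >= y_* - psi,
  the sublevel set {V_eps <= z} is a closed subset of {psi >= y_* - z} \<times> S^1, which is compact by
  condition 6.
\<close>

lemma linear_vec_expansion:
  fixes D :: "real^'n \<Rightarrow> real"
  assumes "linear D"
  shows "D v = (\<Sum>i\<in>UNIV. v $ i * D (axis i 1))"
proof -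
  have "D v = D (\<Sum>i\<in>UNIV. v $ i *\<^sub>R axis i 1)"
    using basis_expansion[of v] by (simp add: scalar_mult_eq_scaleR)
  then show ?thesis
    using assms by (simp add: linear_sum linear_scale)
qed

lemma smooth_imp_differentiable: "smooth f \<Longrightarrow> f differentiable (at x)"
  using Ck.simps(2)[of 0 f] unfolding smooth_def by blast

lemma smooth_imp_grad_nth_differentiable:
  assumes "smooth \<psi>"
  shows "(\<lambda>q. grad \<psi> q $ j) differentiable (at x)"
proof -
  have "Ck 2 \<psi>"
    using assms unfolding smooth_def by blast
  then have "\<forall>i\<in>Basis. \<forall>x. (\<lambda>q. frechet_derivative \<psi> (at q) i) differentiable (at x)"
    by (simp add: numeral_2_eq_2)
  moreover have "axis j 1 \<in> (Basis :: (real^2) set)"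
    by (auto simp: Basis_vec_def)
  ultimately show ?thesis
    by (simp add: grad_def)
qed

lemma has_derivative_grad:
  assumes "\<psi> differentiable (at x)"
  shows "(\<psi> has_derivative (\<lambda>h. grad \<psi> x \<bullet> h)) (at x)"
proof -
  have D: "(\<psi> has_derivative frechet_derivative \<psi> (at x)) (at x)"
    using assms frechet_derivative_works by blast
  have "frechet_derivative \<psi> (at x) = (\<lambda>h. grad \<psi> x \<bullet> h)"
  proof
    fix h
    show "frechet_derivative \<psi> (at x) h = grad \<psi> x \<bullet> h"
      using linear_vec_expansion[OF has_derivative_linear[OF D], of h]
      by (simp add: grad_def inner_vec_def mult.commute)
  qed
  with D show ?thesis
    by simp
qed

lemma has_derivative_grad_nth:
  assumes "(\<lambda>q. grad \<psi> q $ j) differentiable (at x)"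
  shows "((\<lambda>q. grad \<psi> q $ j) has_derivative (\<lambda>h. (h v* hess \<psi> x) $ j)) (at x)"
proof -
  let ?g = "\<lambda>q. grad \<psi> q $ j"
  have D: "(?g has_derivative frechet_derivative ?g (at x)) (at x)"
    using assms frechet_derivative_works by blast
  have "frechet_derivative ?g (at x) = (\<lambda>h. (h v* hess \<psi> x) $ j)"
  proof
    fix h
    show "frechet_derivative ?g (at x) h = (h v* hess \<psi> x) $ j"
      using linear_vec_expansion[OF has_derivative_linear[OF D], of h]
      by (simp add: hess_def vector_matrix_mult_def mult.commute)
  qed
  with D show ?thesis
    by simp
qed

lemma has_real_derivative_along_line:
  assumes "smooth \<psi>"
  shows "((\<lambda>s. \<psi> (p + s *\<^sub>R v)) has_real_derivative grad \<psi> (p + s *\<^sub>R v) \<bullet> v) (at s)"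
proof -
  have "((\<lambda>s. p + s *\<^sub>R v) has_derivative (\<lambda>h. h *\<^sub>R v)) (at s)"
    by (auto intro!: derivative_eq_intros)
  from has_derivative_compose[OF this has_derivative_grad[OF smooth_imp_differentiable[OF assms]]]
  show ?thesis
    by (rule has_derivative_imp_has_field_derivative) simp
qed

lemma has_real_derivative_grad_along_line:
  assumes "smooth \<psi>"
  shows "((\<lambda>s. grad \<psi> (p + s *\<^sub>R v) \<bullet> v) has_real_derivative v \<bullet> (hess \<psi> (p + s *\<^sub>R v) *v v)) (at s)"
proof -
  let ?H = "hess \<psi> (p + s *\<^sub>R v)"
  have "((\<lambda>s. p + s *\<^sub>R v) has_derivative (\<lambda>h. h *\<^sub>R v)) (at s)"
    by (auto intro!: derivative_eq_intros)
  from has_derivative_compose[OF this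
      has_derivative_grad_nth[OF smooth_imp_grad_nth_differentiable[OF assms]]]
  have "((\<lambda>s. grad \<psi> (p + s *\<^sub>R v) $ j) has_derivative (\<lambda>h. ((h *\<^sub>R v) v* ?H) $ j)) (at s)" for j .
  then have "((\<lambda>s. \<Sum>j\<in>UNIV. grad \<psi> (p + s *\<^sub>R v) $ j * v $ j) has_derivative
      (\<lambda>h. \<Sum>j\<in>UNIV. ((h *\<^sub>R v) v* ?H) $ j * v $ j)) (at s)"
    by (intro has_derivative_sum has_derivative_mult_left)
  moreover have "(\<Sum>j\<in>UNIV. ((h *\<^sub>R v) v* ?H) $ j * v $ j) = h * (v \<bullet> (?H *v v))" for h
    using dot_lmul_matrix[of "h *\<^sub>R v" ?H v] by (simp add: inner_vec_def sum_distrib_left ac_simps)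
  ultimately have "((\<lambda>s. grad \<psi> (p + s *\<^sub>R v) \<bullet> v) has_derivative (\<lambda>h. h * (v \<bullet> (?H *v v)))) (at s)"
    by (simp add: inner_vec_def)
  then show ?thesis
    by (rule has_derivative_imp_has_field_derivative) simp
qed

lemma mnorm_nonneg: "0 \<le> mnorm A"
  unfolding mnorm_def by (rule onorm_pos_le[OF matrix_vector_mul_bounded_linear])

lemma abs_quadratic_form_le_mnorm: "\<bar>v \<bullet> (A *v v)\<bar> \<le> mnorm A * (norm v)\<^sup>2"
proof -
  have "\<bar>v \<bullet> (A *v v)\<bar> \<le> norm v * norm (A *v v)"
    by (rule Cauchy_Schwarz_ineq2)
  also have "\<dots> \<le> norm v * (mnorm A * norm v)"
    unfolding mnorm_def by (intro mult_left_mono onorm[OF matrix_vector_mul_bounded_linear]) simp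
  finally show ?thesis
    by (simp add: power2_eq_square ac_simps)
qed

lemma quadratic_upper_bound_of_bounded_hess:
  assumes sm: "smooth \<psi>" and hb: "\<And>q. mnorm (hess \<psi> q) \<le> c"
  shows "\<psi> (p + v) \<le> \<psi> p + grad \<psi> p \<bullet> v + c * (norm v)\<^sup>2"
proof -
  obtain z where z: "0 < z" "z < 1"
    and first_order: "\<psi> (p + 1 *\<^sub>R v) - \<psi> (p + 0 *\<^sub>R v) = (1 - 0) * (grad \<psi> (p + z *\<^sub>R v) \<bullet> v)"
    using MVT2[of 0 1 "\<lambda>s. \<psi> (p + s *\<^sub>R v)"] has_real_derivative_along_line[OF sm] by force
  obtain w where second_order: "grad \<psi> (p + z *\<^sub>R v) \<bullet> v - grad \<psi> (p + 0 *\<^sub>R v) \<bullet> v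
      = (z - 0) * (v \<bullet> (hess \<psi> (p + w *\<^sub>R v) *v v))"
    using MVT2[of 0 z "\<lambda>s. grad \<psi> (p + s *\<^sub>R v) \<bullet> v"] z has_real_derivative_grad_along_line[OF sm]
    by force
  have "v \<bullet> (hess \<psi> (p + w *\<^sub>R v) *v v) \<le> c * (norm v)\<^sup>2"
    using abs_quadratic_form_le_mnorm[of v] hb[of "p + w *\<^sub>R v"]
    by (meson abs_le_D1 mult_right_mono order_trans zero_le_power2)
  moreover have "0 \<le> c * (norm v)\<^sup>2"
    using mnorm_nonneg hb order_trans by (metis zero_le_mult_iff zero_le_power2)
  ultimately have "z * (v \<bullet> (hess \<psi> (p + w *\<^sub>R v) *v v)) \<le> c * (norm v)\<^sup>2"
    using z by (meson less_imp_le mult_left_le_one_le mult_left_mono order_trans)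
  then show ?thesis
    using first_order second_order by simp
qed

lemma gradient_step_decrease:
  assumes "smooth \<psi>" and "\<And>q. mnorm (hess \<psi> q) \<le> c" and c: "0 < c"
  shows "\<psi> (p - (1 / (2 * c)) *\<^sub>R grad \<psi> p) \<le> \<psi> p - (norm (grad \<psi> p))\<^sup>2 / (4 * c)"
proof -
  let ?g = "grad \<psi> p"
  have "\<psi> (p + (- (1 / (2 * c)) *\<^sub>R ?g))
      \<le> \<psi> p + ?g \<bullet> (- (1 / (2 * c)) *\<^sub>R ?g) + c * (norm (- (1 / (2 * c)) *\<^sub>R ?g))\<^sup>2"
    by (rule quadratic_upper_bound_of_bounded_hess[OF assms(1,2)])
  also have "\<dots> = \<psi> p - (norm ?g)\<^sup>2 / (4 * c)"
    using c by (simp add: power_mult_distrib field_simps power2_eq_square flip: power2_norm_eq_inner)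
  finally show ?thesis
    by simp
qed

lemma Inf_range_le_gradient_step:
  assumes "smooth \<psi>" and "\<And>q. mnorm (hess \<psi> q) \<le> c" and "0 < c"
  shows "Inf (range (\<lambda>q. ereal (\<psi> q))) \<le> ereal (\<psi> p - (norm (grad \<psi> p))\<^sup>2 / (4 * c))"
  using Inf_lower[OF rangeI, of "\<lambda>q. ereal (\<psi> q)" "p - (1 / (2 * c)) *\<^sub>R grad \<psi> p"]
    gradient_step_decrease[OF assms, of p]
  by (meson ereal_less_eq(3) order_trans)

lemma norm_diff_perp_sq: "(norm (u - perp u))\<^sup>2 = 2 * (norm u)\<^sup>2"
  by (simp add: power2_norm_eq_inner inner_vec_def sum_2 perp_def algebra_simps)

lemma inner_diff_perp_sq_le: "(g \<bullet> (u - perp u))\<^sup>2 \<le> 2 * (norm g)\<^sup>2 * (norm u)\<^sup>2"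
proof -
  have "(g \<bullet> (u - perp u))\<^sup>2 \<le> (norm g * norm (u - perp u))\<^sup>2"
    by (metis abs_le_square_iff Cauchy_Schwarz_ineq2 abs_mult abs_norm_cancel)
  then show ?thesis
    by (simp add: power_mult_distrib norm_diff_perp_sq)
qed

lemma Veps_ge: "0 \<le> \<epsilon> \<Longrightarrow> \<psi> pstar - \<psi> p \<le> Veps \<psi> pstar \<epsilon> p u"
  unfolding Veps_def by simp

lemma Veps_le:
  assumes "0 \<le> \<epsilon>" and "norm u = 1"
  shows "Veps \<psi> pstar \<epsilon> p u \<le> \<psi> pstar - \<psi> p + 2 * \<epsilon> * (norm (grad \<psi> p))\<^sup>2"
  using mult_left_mono[OF inner_diff_perp_sq_le[of "grad \<psi> p" u] assms(1)] assms(2)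
  unfolding Veps_def by simp

lemma Veps_less_depth:
  assumes "smooth \<psi>" and "\<And>q. mnorm (hess \<psi> q) \<le> c" and c: "0 < c"
    and \<epsilon>: "0 \<le> \<epsilon>" "\<epsilon> < 1 / (8 * c)" and u: "norm u = 1" and g: "grad \<psi> p \<noteq> 0"
  shows "ereal (Veps \<psi> pstar \<epsilon> p u) < ereal (\<psi> pstar) - Inf (range (\<lambda>q. ereal (\<psi> q)))"
proof -
  have "2 * \<epsilon> * (norm (grad \<psi> p))\<^sup>2 < (norm (grad \<psi> p))\<^sup>2 / (4 * c)"
    using \<epsilon> c g by (simp add: field_simps)
  then have "Veps \<psi> pstar \<epsilon> p u < \<psi> pstar - (\<psi> p - (norm (grad \<psi> p))\<^sup>2 / (4 * c))"
    using Veps_le[OF \<epsilon>(1) u, of \<psi> pstar p] by linarith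
  with Inf_range_le_gradient_step[OF assms(1-3), of p] show ?thesis
    by (cases "Inf (range (\<lambda>q. ereal (\<psi> q)))") auto
qed

lemma continuous_on_grad:
  assumes "smooth \<psi>"
  shows "continuous_on UNIV (grad \<psi>)"
proof -
  have "continuous_on UNIV (\<lambda>q. grad \<psi> q $ j)" for j
    using smooth_imp_grad_nth_differentiable[OF assms]
    by (meson continuous_at_imp_continuous_on differentiable_imp_continuous_within)
  then have "continuous_on UNIV (\<lambda>q. \<chi> j. grad \<psi> q $ j)"
    by (rule continuous_on_vec_lambda)
  then show ?thesis
    by simp
qed

lemma continuous_on_perp: "continuous_on UNIV perp"
proof -
  have "linear perp"
    by (rule linearI) (simp_all add: perp_def vec_eq_iff forall_2)
  then show ?thesis
    by (simp add: linear_continuous_on linear_conv_bounded_linear)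
qed

lemma continuous_on_Veps:
  assumes "smooth \<psi>"
  shows "continuous_on UNIV (\<lambda>x. Veps \<psi> pstar \<epsilon> (fst x) (snd x))"
proof -
  have "continuous_on UNIV \<psi>"
    using smooth_imp_differentiable[OF assms]
    by (meson continuous_at_imp_continuous_on differentiable_imp_continuous_within)
  then have "continuous_on UNIV (\<lambda>x. \<psi> (fst x))"
    by (rule continuous_on_compose2) (auto intro: continuous_on_fst continuous_on_id)
  moreover have "continuous_on UNIV (\<lambda>x. grad \<psi> (fst x))"
    by (rule continuous_on_compose2[OF continuous_on_grad[OF assms]])
      (auto intro: continuous_on_fst continuous_on_id)
  moreover have "continuous_on UNIV (\<lambda>x. perp (snd x))"
    by (rule continuous_on_compose2[OF continuous_on_perp])
      (auto intro: continuous_on_snd continuous_on_id)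
  ultimately show ?thesis
    unfolding Veps_def by (intro continuous_intros)
qed

lemma compact_Veps_sublevel:
  assumes "smooth \<psi>" and "0 \<le> \<epsilon>" and "compact {p. \<psi> pstar - z \<le> \<psi> p}"
  shows "compact {(p, u). u \<in> sphere 0 1 \<and> Veps \<psi> pstar \<epsilon> p u \<le> z}"
proof -
  have "\<psi> pstar - z \<le> \<psi> p" if "Veps \<psi> pstar \<epsilon> p u \<le> z" for p u
    using Veps_ge[OF assms(2), of \<psi> pstar p u] that by linarith
  then have "{(p, u). u \<in> sphere 0 1 \<and> Veps \<psi> pstar \<epsilon> p u \<le> z}
      = ({p. \<psi> pstar - z \<le> \<psi> p} \<times> sphere 0 1) \<inter> {x. Veps \<psi> pstar \<epsilon> (fst x) (snd x) \<le> z}"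
    by auto
  moreover have "compact ({p. \<psi> pstar - z \<le> \<psi> p} \<times> sphere (0 :: real^2) 1)"
    using assms(3) by (rule compact_Times) simp
  moreover have "closed {x. Veps \<psi> pstar \<epsilon> (fst x) (snd x) \<le> z}"
    using continuous_on_Veps[OF assms(1)] by (intro closed_Collect_le continuous_on_const) auto
  ultimately show ?thesis
    by (simp add: compact_Int_closed)
qed

theorem lemma1:
  fixes \<psi> :: "real^2 \<Rightarrow> real" and pstar :: "real^2"
  assumes sm: "smooth \<psi>"
    and c1: "\<And>p. p \<noteq> pstar \<Longrightarrow> \<psi> p < \<psi> pstar"
    and c2: "neg_definite (hess \<psi> pstar)"
    and c3: "\<exists>r1>0. \<forall>v. norm v \<le> r1 \<longrightarrow> \<psi> (pstar + v) = \<psi> (pstar - v)"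
    and c4: "\<exists>c1>0. \<forall>p. mnorm (hess \<psi> p) \<le> c1"
    and c5: "\<And>p. p \<noteq> pstar \<Longrightarrow> grad \<psi> p \<noteq> 0"
    and c6: "\<And>y. Inf (range (\<lambda>p. ereal (\<psi> p))) < ereal y \<Longrightarrow> y < \<psi> pstar
               \<Longrightarrow> compact {p. \<psi> p \<ge> y}"
    and c7: "\<exists>c2>0. \<exists>r2>0. \<exists>r3>0. \<forall>p v. norm (p - pstar) \<ge> r2 \<longrightarrow> norm v \<le> r3 \<longrightarrow>
               mnorm (hess \<psi> (p + v)) \<le> c2 * norm (grad \<psi> p)"
  shows "\<exists>\<epsilon>1>0. \<forall>\<epsilon>. 0 < \<epsilon> \<and> \<epsilon> < \<epsilon>1 \<longrightarrow>
           (\<forall>p u. u \<in> sphere 0 1 \<and> p \<noteq> pstar \<longrightarrow>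
              0 < Veps \<psi> pstar \<epsilon> p u \<and>
              ereal (Veps \<psi> pstar \<epsilon> p u) < ereal (\<psi> pstar) - Inf (range (\<lambda>p. ereal (\<psi> p)))) \<and>
           (\<forall>z. 0 < z \<and> ereal z < ereal (\<psi> pstar) - Inf (range (\<lambda>p. ereal (\<psi> p))) \<longrightarrow>
              compact {(p, u). u \<in> sphere 0 1 \<and> Veps \<psi> pstar \<epsilon> p u \<le> z})"
proof -
  obtain c where c: "0 < c" and hess_bound: "\<And>p. mnorm (hess \<psi> p) \<le> c"
    using c4 by blast
  let ?inf = "Inf (range (\<lambda>p. ereal (\<psi> p)))"
  show ?thesis
  proof (intro exI[of _ "1 / (8 * c)"] conjI allI impI)
    show "0 < 1 / (8 * c)"
      using c by simp
  next
    fix \<epsilon> :: real and p u :: "real^2"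
    assume \<epsilon>: "0 < \<epsilon> \<and> \<epsilon> < 1 / (8 * c)" and pu: "u \<in> sphere 0 1 \<and> p \<noteq> pstar"
    show "0 < Veps \<psi> pstar \<epsilon> p u"
      using Veps_ge[of \<epsilon> \<psi> pstar p u] c1[of p] \<epsilon> pu by linarith
    show "ereal (Veps \<psi> pstar \<epsilon> p u) < ereal (\<psi> pstar) - ?inf"
      using \<epsilon> pu c5[of p] by (intro Veps_less_depth[OF sm hess_bound c]) auto
  next
    fix \<epsilon> z :: real
    assume \<epsilon>: "0 < \<epsilon> \<and> \<epsilon> < 1 / (8 * c)" and z: "0 < z \<and> ereal z < ereal (\<psi> pstar) - ?inf"
    have "?inf < ereal (\<psi> pstar - z)"
      using z by (cases ?inf) auto
    then have "compact {p. \<psi> pstar - z \<le> \<psi> p}"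
      using c6[of "\<psi> pstar - z"] z by linarith
    then show "compact {(p, u). u \<in> sphere 0 1 \<and> Veps \<psi> pstar \<epsilon> p u \<le> z}"
      using \<epsilon> by (intro compact_Veps_sublevel[OF sm]) auto
  qed
qed

end
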